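(* Assume $\mu<0$ and conditions (C1) and (C2). Let $\pi^*_1,\pi^*_2$ be the two marginals of $\pi^*$ on $E$ and $\mu^*=\pi^*(f)$. Then $$\pi^*_1\otimes\pi_Q(f)<\mu^*\quad\text{and}\quad\pi_P\otimes\pi^*_2(f)<\mu^*.$$
   Context: Let $E$ be a finite set and $P,Q$ irreducible aperiodic stochastic $E\times E$ matrices with invariant probability vectors $\pi_P,\pi_Q$; $\pi=\pi_P\otimes\pi_Q$. Let $f:E\times E\to\mathbb Z$ with gcd of its values equal to $1$; $\nu(f)=\sum f\,d\nu$; $\mu=\pi(f)$. A cycle w.r.t. $P$ is a sequence $x_1,\dots,x_n$ with $P(x_k,x_{k+1})>0$ for all $k$, indices mod $n$. (C1): for some $n\ge1$ there are cycles $x_1,\dots,x_n$ w.r.t. $P$ and $y_1,\dots,y_n$ w.r.t. $Q$ with $\sum_kf(x_k,y_k)>0$. (C2): for every $T\ge1$ there are $n\ge1$ and cycles $x_1,\dots,x_n$ w.r.t. $P$ and $y_1,\dots,y_n$ w.r.t. $Q$ with $\sum_kf(x_k,y_k)\ne\sum_kf(x_k,y_{k+T\bmod n})$. Let $\Phi(\theta)_{(x,y),(x',y')}=e^{\theta f(x',y')}P_{x,x'}Q_{y,y'}$, $\varphi(\theta)$ its spectral radius, $\theta^*>0$ the unique positive solution of $\varphi(\theta)=1$, $r^*$ a positive right eigenvector of $\Phi(\theta^* )$ for eigenvalue 1, $R^*_{(x,y),(x',y')}=\frac{r^*(x',y')}{r^*(x,y)}\Phi(\theta^* )_{(x,y),(x',y')}$,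 and $\pi^*$ the invariant probability vector of $R^*$. *)

theory Defs
  imports "HOL-Analysis.Analysis"
begin

fun mpow :: "('b::finite \<Rightarrow> 'b \<Rightarrow> real) \<Rightarrow> nat \<Rightarrow> 'b \<Rightarrow> 'b \<Rightarrow> real" where
  "mpow M 0 = (\<lambda>i j. if i = j then 1 else 0)"
| "mpow M (Suc n) = (\<lambda>i j. \<Sum>k\<in>UNIV. mpow M n i k * M k j)"

definition stochastic :: "('b::finite \<Rightarrow> 'b \<Rightarrow> real) \<Rightarrow> bool" where
  "stochastic M \<longleftrightarrow> (\<forall>i j. M i j \<ge> 0) \<and> (\<forall>i. (\<Sum>j\<in>UNIV. M i j) = 1)"

definition irreducible_mat :: "('b::finite \<Rightarrow> 'b \<Rightarrow> real) \<Rightarrow> bool" where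
  "irreducible_mat M \<longleftrightarrow> (\<forall>i j. \<exists>n>0. mpow M n i j > 0)"

definition aperiodic_mat :: "('b::finite \<Rightarrow> 'b \<Rightarrow> real) \<Rightarrow> bool" where
  "aperiodic_mat M \<longleftrightarrow> (\<forall>i. Gcd {n::nat. n > 0 \<and> mpow M n i i > 0} = 1)"

definition invariant_prob :: "('b::finite \<Rightarrow> 'b \<Rightarrow> real) \<Rightarrow> ('b \<Rightarrow> real) \<Rightarrow> bool" where
  "invariant_prob M p \<longleftrightarrow> (\<forall>i. p i \<ge> 0) \<and> (\<Sum>i\<in>UNIV. p i) = 1 \<and>
     (\<forall>j. (\<Sum>i\<in>UNIV. p i * M i j) = p j)"

definition is_cycle :: "('b \<Rightarrow> 'b \<Rightarrow> real) \<Rightarrow> nat \<Rightarrow> (nat \<Rightarrow> 'b) \<Rightarrow> bool" where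
  "is_cycle M n x \<longleftrightarrow> n \<ge> 1 \<and> (\<forall>k<n. M (x k) (x ((k + 1) mod n)) > 0)"

definition cond_C1 :: "('b \<Rightarrow> 'b \<Rightarrow> real) \<Rightarrow> ('b \<Rightarrow> 'b \<Rightarrow> real) \<Rightarrow> ('b \<times> 'b \<Rightarrow> int) \<Rightarrow> bool" where
  "cond_C1 P Q f \<longleftrightarrow> (\<exists>n\<ge>1. \<exists>x y. is_cycle P n x \<and> is_cycle Q n y \<and>
      (\<Sum>k<n. f (x k, y k)) > 0)"

definition cond_C2 :: "('b \<Rightarrow> 'b \<Rightarrow> real) \<Rightarrow> ('b \<Rightarrow> 'b \<Rightarrow> real) \<Rightarrow> ('b \<times> 'b \<Rightarrow> int) \<Rightarrow> bool" where
  "cond_C2 P Q f \<longleftrightarrow> (\<forall>T::nat\<ge>1. \<exists>n\<ge>1. \<exists>x y. is_cycle P n x \<and> is_cycle Q n y \<and>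
      (\<Sum>k<n. f (x k, y k)) \<noteq> (\<Sum>k<n. f (x k, y ((k + T) mod n))))"

definition Phi :: "('b \<Rightarrow> 'b \<Rightarrow> real) \<Rightarrow> ('b \<Rightarrow> 'b \<Rightarrow> real) \<Rightarrow> ('b \<times> 'b \<Rightarrow> int) \<Rightarrow> real
    \<Rightarrow> 'b \<times> 'b \<Rightarrow> 'b \<times> 'b \<Rightarrow> real" where
  "Phi P Q f \<theta> = (\<lambda>(x, y) (x', y'). exp (\<theta> * real_of_int (f (x', y'))) * P x x' * Q y y')"

definition spectral_radius_mat :: "('b::finite \<Rightarrow> 'b \<Rightarrow> real) \<Rightarrow> real" where
  "spectral_radius_mat M = Max {cmod c | c. \<exists>v::'b \<Rightarrow> complex. v \<noteq> (\<lambda>_. 0) \<and>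
      (\<forall>i. (\<Sum>j\<in>UNIV. complex_of_real (M i j) * v j) = c * v i)}"

end

(* Write R* = e^L (P x Q) with L z z' = theta f z' + ln r z' - ln r z (log_tilt). Let w (flow)
   be the stationary flow pi* R* and kappa (flow_fst) its projection to the first coordinate, an
   edge measure on E with both marginals pi*_1, and put G = kappa / (pi*_1 P) (density_fst).
   The flow w and the decoupled flow nu = kappa x pi_Q Q (decoupled_flow) have equal in- and
   out-marginals (pi*, resp. pi*_1 x pi_Q), so the ln r terms of L telescope:
     sum w L = theta pi*(f)   and   sum nu L = theta (pi*_1 x pi_Q)(f).
   Gibbs' inequality a t <= a (e^t - 1), applied to w and to nu, gives
     sum w L >= sum kappa ln G = sum nu ln G > sum nu L.
   The last step is strict since otherwise L = ln G on every edge, so that cycle sums of f would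
   not change when the Q-cycle is shifted by one step, contradicting (C2) for T = 1. The second
   claim is the first one for the chain with P and Q exchanged. Aperiodicity, gcd f = 1, mu < 0,
   (C1) and the value 1 of phi at theta* only serve to make theta*, r* and pi* exist. *)

theory Submission
  imports Defs
begin

lemma sum_pos_imp_ex_pos:
  fixes g :: "'i \<Rightarrow> real"
  assumes "0 < sum g A"
  shows "\<exists>a\<in>A. 0 < g a"
  using assms sum_nonpos[of A g] by (meson not_le)

lemma sum_UNIV_pair:
  fixes g :: "'a::finite \<times> 'b::finite \<Rightarrow> real"
  shows "(\<Sum>z\<in>UNIV. g z) = (\<Sum>x\<in>UNIV. \<Sum>y\<in>UNIV. g (x, y))"
  by (simp add: sum.cartesian_product)

lemma sum_UNIV_swap:
  fixes g :: "'a::finite \<times> 'b::finite \<Rightarrow> real"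
  shows "(\<Sum>z\<in>UNIV. g (prod.swap z)) = (\<Sum>z\<in>UNIV. g z)"
  by (rule sum.reindex_bij_betw[OF bij_swap])

lemma sum_pairs_proj_fst:
  fixes a :: "'a::finite \<times> 'b::finite \<Rightarrow> 'a \<times> 'b \<Rightarrow> real"
  shows "(\<Sum>z\<in>UNIV. \<Sum>z'\<in>UNIV. a z z' * h (fst z) (fst z'))
       = (\<Sum>x\<in>UNIV. \<Sum>x'\<in>UNIV. (\<Sum>y\<in>UNIV. \<Sum>y'\<in>UNIV. a (x, y) (x', y')) * h x x')"
proof -
  have "(\<Sum>z\<in>UNIV. \<Sum>z'\<in>UNIV. a z z' * h (fst z) (fst z'))
      = (\<Sum>x\<in>UNIV. \<Sum>y\<in>UNIV. \<Sum>x'\<in>UNIV. \<Sum>y'\<in>UNIV. a (x, y) (x', y') * h x x')"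
    by (simp add: sum_UNIV_pair)
  also have "\<dots> = (\<Sum>x\<in>UNIV. \<Sum>x'\<in>UNIV. \<Sum>y\<in>UNIV. \<Sum>y'\<in>UNIV. a (x, y) (x', y') * h x x')"
    by (intro sum.cong refl sum.swap)
  finally show ?thesis
    by (simp add: sum_distrib_right)
qed

lemma sum_flow_telescoping:
  fixes w :: "'z::finite \<Rightarrow> 'z \<Rightarrow> real"
  assumes out: "\<And>z. (\<Sum>z'\<in>UNIV. w z z') = m z"
    and into: "\<And>z'. (\<Sum>z\<in>UNIV. w z z') = m z'"
  shows "(\<Sum>z\<in>UNIV. \<Sum>z'\<in>UNIV. w z z' * (g z' + h z' - h z)) = (\<Sum>z\<in>UNIV. m z * g z)"
proof -
  have into_weighted: "(\<Sum>z\<in>UNIV. \<Sum>z'\<in>UNIV. w z z' * k z') = (\<Sum>z'\<in>UNIV. m z' * k z')" for k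
    by (subst sum.swap) (simp add: into sum_distrib_right[symmetric])
  have out_weighted: "(\<Sum>z\<in>UNIV. \<Sum>z'\<in>UNIV. w z z' * h z) = (\<Sum>z\<in>UNIV. m z * h z)"
    by (simp only: sum_distrib_right[symmetric] out)
  have "(\<Sum>z\<in>UNIV. \<Sum>z'\<in>UNIV. w z z' * (g z' + h z' - h z))
      = (\<Sum>z\<in>UNIV. \<Sum>z'\<in>UNIV. w z z' * g z') + (\<Sum>z\<in>UNIV. \<Sum>z'\<in>UNIV. w z z' * h z')
        - (\<Sum>z\<in>UNIV. \<Sum>z'\<in>UNIV. w z z' * h z)"
    by (simp add: distrib_left right_diff_distrib sum.distrib sum_subtractf)
  then show ?thesis
    by (simp add: into_weighted out_weighted)
qed

lemma mult_le_mult_exp_minus: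
  fixes a t :: real
  assumes "0 \<le> a"
  shows "a * t \<le> a * exp t - a"
  using mult_left_mono[OF exp_ge_add_one_self[of t] assms] by (simp add: algebra_simps)

lemma mult_less_mult_exp_minus:
  fixes a t :: real
  assumes "0 < a" "t \<noteq> 0"
  shows "a * t < a * exp t - a"
proof -
  have "1 + t < exp t"
    using exp_minus_greater[of "- t"] assms(2) by simp
  from mult_strict_left_mono[OF this assms(1)] show ?thesis
    by (simp add: algebra_simps)
qed

lemma gibbs_inequality:
  fixes a t :: "'i \<Rightarrow> 'j \<Rightarrow> real"
  assumes "finite A" "finite B" "\<And>i j. i \<in> A \<Longrightarrow> j \<in> B \<Longrightarrow> 0 \<le> a i j"
    and "(\<Sum>i\<in>A. \<Sum>j\<in>B. a i j * exp (t i j)) = (\<Sum>i\<in>A. \<Sum>j\<in>B. a i j)"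
  shows "(\<Sum>i\<in>A. \<Sum>j\<in>B. a i j * t i j) \<le> 0"
proof -
  have "(\<Sum>i\<in>A. \<Sum>j\<in>B. a i j * t i j) \<le> (\<Sum>i\<in>A. \<Sum>j\<in>B. a i j * exp (t i j) - a i j)"
    using assms(3) by (intro sum_mono mult_le_mult_exp_minus)
  with assms(4) show ?thesis
    by (simp add: sum_subtractf)
qed

lemma gibbs_inequality_strict:
  fixes a t :: "'i \<Rightarrow> 'j \<Rightarrow> real"
  assumes "finite A" "finite B" "\<And>i j. i \<in> A \<Longrightarrow> j \<in> B \<Longrightarrow> 0 \<le> a i j"
    and "(\<Sum>i\<in>A. \<Sum>j\<in>B. a i j * exp (t i j)) = (\<Sum>i\<in>A. \<Sum>j\<in>B. a i j)"
    and "u \<in> A" "v \<in> B" "0 < a u v" "t u v \<noteq> 0"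
  shows "(\<Sum>i\<in>A. \<Sum>j\<in>B. a i j * t i j) < 0"
proof -
  have le: "a i j * t i j \<le> a i j * exp (t i j) - a i j" if "i \<in> A" "j \<in> B" for i j
    using assms(3)[OF that] by (rule mult_le_mult_exp_minus)
  have "(\<Sum>j\<in>B. a u j * t u j) < (\<Sum>j\<in>B. a u j * exp (t u j) - a u j)"
    using assms(2,5,6) le mult_less_mult_exp_minus[OF assms(7,8)]
    by (intro sum_strict_mono_ex1) auto
  then have "(\<Sum>i\<in>A. \<Sum>j\<in>B. a i j * t i j) < (\<Sum>i\<in>A. \<Sum>j\<in>B. a i j * exp (t i j) - a i j)"
    using assms(1,5) le by (intro sum_strict_mono_ex1) (auto intro: sum_mono)
  with assms(4) show ?thesis
    by (simp add: sum_subtractf)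
qed

lemma sum_rotate:
  fixes g :: "nat \<Rightarrow> real"
  assumes "1 \<le> n"
  shows "(\<Sum>k<n. g ((k + 1) mod n)) = (\<Sum>k<n. g k)"
proof -
  obtain m where n: "n = Suc m"
    using assms by (cases n) auto
  have "(\<Sum>k<Suc m. g ((k + 1) mod Suc m)) = (\<Sum>k<m. g (Suc k)) + g 0"
    by (simp add: lessThan_Suc)
  also have "\<dots> = (\<Sum>k<Suc m. g k)"
    by (metis add.commute sum.lessThan_Suc_shift)
  finally show ?thesis
    using n by simp
qed

lemma is_cycle_shift:
  "is_cycle M n xs \<Longrightarrow> is_cycle M n (\<lambda>k. xs ((k + 1) mod n))"
  unfolding is_cycle_def by auto

definition shift_sensitive :: "('a \<Rightarrow> 'a \<Rightarrow> real) \<Rightarrow> ('b \<Rightarrow> 'b \<Rightarrow> real) \<Rightarrow> ('a \<times> 'b \<Rightarrow> int) \<Rightarrow> bool"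
  where "shift_sensitive P Q f \<longleftrightarrow> (\<exists>n xs ys. is_cycle P n xs \<and> is_cycle Q n ys \<and>
    (\<Sum>k<n. f (xs k, ys k)) \<noteq> (\<Sum>k<n. f (xs k, ys ((k + 1) mod n))))"

lemma cond_C2_imp_shift_sensitive: "cond_C2 P Q f \<Longrightarrow> shift_sensitive P Q f"
  unfolding cond_C2_def shift_sensitive_def by (metis order_refl)

lemma shift_sensitive_swap:
  assumes "shift_sensitive P Q f"
  shows "shift_sensitive Q P (f \<circ> prod.swap)"
proof -
  obtain n xs ys where cycles: "is_cycle P n xs" "is_cycle Q n ys"
    and shift: "(\<Sum>k<n. f (xs k, ys k)) \<noteq> (\<Sum>k<n. f (xs k, ys ((k + 1) mod n)))"
    using assms unfolding shift_sensitive_def by blast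
  have "1 \<le> n"
    using cycles(1) by (simp add: is_cycle_def)
  from sum_rotate[OF this, of "\<lambda>k. real_of_int (f (xs k, ys k))"] shift
  have "(\<Sum>k<n. f (xs k, ys ((k + 1) mod n))) \<noteq> (\<Sum>k<n. f (xs ((k + 1) mod n), ys ((k + 1) mod n)))"
    by (simp flip: of_int_sum)
  then show ?thesis
    using is_cycle_shift[OF cycles(2)] cycles(1) unfolding shift_sensitive_def
    by (intro exI[where x = n] exI[where x = "\<lambda>k. ys ((k + 1) mod n)"] exI[where x = xs]) simp
qed

lemma irreducible_positive:
  fixes M :: "'b::finite \<Rightarrow> 'b \<Rightarrow> real" and g :: "'b \<Rightarrow> real"
  assumes nonneg: "\<And>i j. 0 \<le> M i j" and "irreducible_mat M"
    and step: "\<And>i j. 0 < M i j \<Longrightarrow> 0 < g i \<Longrightarrow> 0 < g j"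
    and "0 < g i"
  shows "0 < g j"
proof -
  have "0 < g j" if "mpow M n i j \<noteq> 0" for n j
    using that
  proof (induction n arbitrary: j)
    case 0
    then show ?case
      using \<open>0 < g i\<close> by (simp split: if_splits)
  next
    case (Suc n)
    then obtain k where "mpow M n i k * M k j \<noteq> 0"
      by (auto elim: sum.not_neutral_contains_not_neutral)
    then have k: "mpow M n i k \<noteq> 0" "M k j \<noteq> 0"
      by auto
    have "0 < M k j"
      using k(2) nonneg[of k j] by (simp add: less_le)
    then show ?case
      using step Suc.IH[OF k(1)] by blast
  qed
  moreover obtain n where "0 < mpow M n i j"
    using \<open>irreducible_mat M\<close> unfolding irreducible_mat_def by blast
  ultimately show ?thesis
    by (metis less_irrefl)
qed

lemma invariant_prob_pos:
  assumes "stochastic M" "irreducible_mat M" "invariant_prob M p"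
  shows "0 < p j"
proof -
  have nonneg: "0 \<le> M i j" "0 \<le> p i" for i j
    using assms(1,3) unfolding stochastic_def invariant_prob_def by auto
  obtain i where "0 < p i"
    using assms(3) sum_pos_imp_ex_pos[of p UNIV] unfolding invariant_prob_def by auto
  moreover have "0 < p j'" if "0 < M i' j'" "0 < p i'" for i' j'
  proof -
    have "p i' * M i' j' \<le> (\<Sum>i\<in>UNIV. p i * M i j')"
      by (rule member_le_sum) (auto simp: nonneg)
    then show ?thesis
      using assms(3) that unfolding invariant_prob_def by (metis mult_pos_pos order_less_le_trans)
  qed
  ultimately show ?thesis
    using irreducible_positive[OF nonneg(1) assms(2)] by blast
qed

lemma Phi_apply:
  "Phi P Q f \<theta> z z' = exp (\<theta> * f z') * P (fst z) (fst z') * Q (snd z) (snd z')"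
  by (simp add: Phi_def split_def)

lemma Phi_swap:
  "Phi Q P (f \<circ> prod.swap) \<theta> z z' = Phi P Q f \<theta> (prod.swap z) (prod.swap z')"
  by (simp add: Phi_apply)

locale tilted_product_chain =
  fixes P Q :: "'a::finite \<Rightarrow> 'a \<Rightarrow> real"
    and piQ :: "'a \<Rightarrow> real"
    and f :: "'a \<times> 'a \<Rightarrow> int"
    and \<theta> :: real
    and r pis :: "'a \<times> 'a \<Rightarrow> real"
  assumes stochastic_P: "stochastic P" and irreducible_P: "irreducible_mat P"
    and stochastic_Q: "stochastic Q" and irreducible_Q: "irreducible_mat Q"
    and invariant_piQ: "invariant_prob Q piQ"
    and \<theta>_pos: "0 < \<theta>"
    and r_pos: "\<And>z. 0 < r z"
    and eigenvector: "\<And>z. (\<Sum>z'\<in>UNIV. Phi P Q f \<theta> z z' * r z') = r z"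
    and invariant_pis: "invariant_prob (\<lambda>z z'. r z' / r z * Phi P Q f \<theta> z z') pis"
    and shift_sensitive_PQ: "shift_sensitive P Q f"
begin

lemma P_nonneg: "0 \<le> P x x'"
  using stochastic_P by (simp add: stochastic_def)

lemma Q_nonneg: "0 \<le> Q y y'"
  using stochastic_Q by (simp add: stochastic_def)

lemma Q_row_sum: "(\<Sum>y'\<in>UNIV. Q y y') = 1"
  using stochastic_Q by (simp add: stochastic_def)

lemma piQ_pos: "0 < piQ y"
  using invariant_prob_pos[OF stochastic_Q irreducible_Q invariant_piQ] .

lemma piQ_sum: "(\<Sum>y\<in>UNIV. piQ y) = 1"
  using invariant_piQ by (simp add: invariant_prob_def)

lemma piQ_stationary: "(\<Sum>y\<in>UNIV. piQ y * Q y y') = piQ y'"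
  using invariant_piQ by (simp add: invariant_prob_def)

lemma pis_nonneg: "0 \<le> pis z"
  using invariant_pis unfolding invariant_prob_def by blast

lemma pis_sum: "(\<Sum>z\<in>UNIV. pis z) = 1"
  using invariant_pis by (simp add: invariant_prob_def)

definition R :: "'a \<times> 'a \<Rightarrow> 'a \<times> 'a \<Rightarrow> real"
  where "R z z' = r z' / r z * Phi P Q f \<theta> z z'"

definition log_tilt :: "'a \<times> 'a \<Rightarrow> 'a \<times> 'a \<Rightarrow> real"
  where "log_tilt z z' = \<theta> * f z' + ln (r z') - ln (r z)"

lemma R_eq: "R z z' = exp (log_tilt z z') * P (fst z) (fst z') * Q (snd z) (snd z')"
  using r_pos[of z] r_pos[of z']
  by (simp add: R_def log_tilt_def Phi_apply exp_add exp_diff)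

lemma R_nonneg: "0 \<le> R z z'"
  by (simp add: R_eq P_nonneg Q_nonneg)

lemma R_row_sum: "(\<Sum>z'\<in>UNIV. R z z') = 1"
proof -
  have "(\<Sum>z'\<in>UNIV. R z z') = (\<Sum>z'\<in>UNIV. Phi P Q f \<theta> z z' * r z') / r z"
    by (simp add: R_def sum_divide_distrib mult.commute)
  then show ?thesis
    using r_pos[of z] by (simp add: eigenvector)
qed

definition flow :: "'a \<times> 'a \<Rightarrow> 'a \<times> 'a \<Rightarrow> real"
  where "flow z z' = pis z * R z z'"

lemma flow_nonneg: "0 \<le> flow z z'"
  by (simp add: flow_def pis_nonneg R_nonneg)

lemma flow_out: "(\<Sum>z'\<in>UNIV. flow z z') = pis z"
  by (simp add: flow_def sum_distrib_left[symmetric] R_row_sum)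

lemma flow_in: "(\<Sum>z\<in>UNIV. flow z z') = pis z'"
  using invariant_pis unfolding invariant_prob_def flow_def R_def by blast

lemma sum_flow_log_tilt:
  "(\<Sum>z\<in>UNIV. \<Sum>z'\<in>UNIV. flow z z' * log_tilt z z') = \<theta> * (\<Sum>z\<in>UNIV. pis z * f z)"
  unfolding log_tilt_def
  by (simp add: sum_flow_telescoping[OF flow_out flow_in] sum_distrib_left mult.left_commute)

definition marginal_fst :: "'a \<Rightarrow> real"
  where "marginal_fst x = (\<Sum>y\<in>UNIV. pis (x, y))"

definition flow_fst :: "'a \<Rightarrow> 'a \<Rightarrow> real"
  where "flow_fst x x' = (\<Sum>y\<in>UNIV. \<Sum>y'\<in>UNIV. flow (x, y) (x', y'))"

lemma marginal_fst_sum: "(\<Sum>x\<in>UNIV. marginal_fst x) = 1"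
  using pis_sum by (simp add: marginal_fst_def sum_UNIV_pair)

lemma flow_fst_nonneg: "0 \<le> flow_fst x x'"
  by (simp add: flow_fst_def flow_nonneg sum_nonneg)

lemma flow_fst_out: "(\<Sum>x'\<in>UNIV. flow_fst x x') = marginal_fst x"
proof -
  have "(\<Sum>x'\<in>UNIV. flow_fst x x') = (\<Sum>y\<in>UNIV. \<Sum>x'\<in>UNIV. \<Sum>y'\<in>UNIV. flow (x, y) (x', y'))"
    unfolding flow_fst_def by (rule sum.swap)
  then show ?thesis
    by (simp add: marginal_fst_def flow_out flip: sum_UNIV_pair)
qed

lemma flow_fst_in: "(\<Sum>x\<in>UNIV. flow_fst x x') = marginal_fst x'"
proof -
  have flow_in_pairs: "(\<Sum>x\<in>UNIV. \<Sum>y\<in>UNIV. flow (x, y) z') = pis z'" for z'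
    using flow_in[of z'] by (simp add: sum_UNIV_pair)
  have "(\<Sum>x\<in>UNIV. flow_fst x x') = (\<Sum>x\<in>UNIV. \<Sum>y'\<in>UNIV. \<Sum>y\<in>UNIV. flow (x, y) (x', y'))"
    unfolding flow_fst_def by (intro sum.cong refl sum.swap)
  also have "\<dots> = (\<Sum>y'\<in>UNIV. \<Sum>x\<in>UNIV. \<Sum>y\<in>UNIV. flow (x, y) (x', y'))"
    by (rule sum.swap)
  also have "\<dots> = marginal_fst x'"
    by (simp add: flow_in_pairs marginal_fst_def)
  finally show ?thesis .
qed

lemma flow_fst_pos:
  assumes "0 < P x x'" "0 < marginal_fst x"
  shows "0 < flow_fst x x'"
proof -
  obtain y where "0 < pis (x, y)"
    using assms(2) sum_pos_imp_ex_pos unfolding marginal_fst_def by blast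
  moreover obtain y' where "0 < Q y y'"
    using Q_row_sum[of y] sum_pos_imp_ex_pos[of "Q y" UNIV] by auto
  ultimately have "0 < flow (x, y) (x', y')"
    using assms(1) by (simp add: flow_def R_eq)
  also have "\<dots> \<le> (\<Sum>y'\<in>UNIV. flow (x, y) (x', y'))"
    by (rule member_le_sum) (simp_all add: flow_nonneg)
  also have "\<dots> \<le> flow_fst x x'"
    unfolding flow_fst_def
    by (rule member_le_sum[where f = "\<lambda>y. \<Sum>y'\<in>UNIV. flow (x, y) (x', y')"])
      (simp_all add: flow_nonneg sum_nonneg)
  finally show ?thesis .
qed

lemma marginal_fst_pos: "0 < marginal_fst x"
proof -
  obtain x0 where "0 < marginal_fst x0"
    using marginal_fst_sum sum_pos_imp_ex_pos[of marginal_fst UNIV] by auto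
  moreover have "0 < marginal_fst x'" if "0 < P x x'" "0 < marginal_fst x" for x x'
  proof -
    have "flow_fst x x' \<le> (\<Sum>x\<in>UNIV. flow_fst x x')"
      by (rule member_le_sum) (simp_all add: flow_fst_nonneg)
    then show ?thesis
      using flow_fst_pos[OF that] flow_fst_in[of x'] by simp
  qed
  ultimately show ?thesis
    using irreducible_positive[OF P_nonneg irreducible_P] by blast
qed

lemma flow_fst_eq_0: "P x x' = 0 \<Longrightarrow> flow_fst x x' = 0"
  by (simp add: flow_fst_def flow_def R_eq)

lemma flow_fst_pos_iff: "0 < flow_fst x x' \<longleftrightarrow> 0 < P x x'"
  using P_nonneg[of x x'] flow_fst_eq_0[of x x'] flow_fst_pos[OF _ marginal_fst_pos]
  by (auto simp: less_le)

text \<open>Where \<open>P x x' = 0\<close> this is \<open>0\<close> by the division convention; it only occurs weighted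
  by flows that vanish there.\<close>
definition density_fst :: "'a \<Rightarrow> 'a \<Rightarrow> real"
  where "density_fst x x' = flow_fst x x' / (marginal_fst x * P x x')"

definition decoupled_flow :: "'a \<times> 'a \<Rightarrow> 'a \<times> 'a \<Rightarrow> real"
  where "decoupled_flow z z' = flow_fst (fst z) (fst z') * piQ (snd z) * Q (snd z) (snd z')"

lemma decoupled_flow_nonneg: "0 \<le> decoupled_flow z z'"
  using piQ_pos[of "snd z"] by (simp add: decoupled_flow_def flow_fst_nonneg Q_nonneg)

lemma decoupled_flow_out: "(\<Sum>z'\<in>UNIV. decoupled_flow z z') = marginal_fst (fst z) * piQ (snd z)"
proof -
  have "(\<Sum>z'\<in>UNIV. decoupled_flow z z')
      = (\<Sum>x'\<in>UNIV. flow_fst (fst z) x' * piQ (snd z) * (\<Sum>y'\<in>UNIV. Q (snd z) y'))"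
    by (simp add: decoupled_flow_def sum_UNIV_pair sum_distrib_left)
  then show ?thesis
    by (simp add: Q_row_sum flow_fst_out flip: sum_distrib_right)
qed

lemma decoupled_flow_in: "(\<Sum>z\<in>UNIV. decoupled_flow z z') = marginal_fst (fst z') * piQ (snd z')"
proof -
  have "(\<Sum>z\<in>UNIV. decoupled_flow z z')
      = (\<Sum>x\<in>UNIV. flow_fst x (fst z')) * (\<Sum>y\<in>UNIV. piQ y * Q y (snd z'))"
    by (simp add: decoupled_flow_def sum_UNIV_pair sum_product mult.assoc)
  then show ?thesis
    by (simp add: flow_fst_in piQ_stationary)
qed

lemma sum_decoupled_flow_log_tilt:
  "(\<Sum>z\<in>UNIV. \<Sum>z'\<in>UNIV. decoupled_flow z z' * log_tilt z z')
     = \<theta> * (\<Sum>z\<in>UNIV. marginal_fst (fst z) * piQ (snd z) * f z)"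
  unfolding log_tilt_def
  by (simp add: sum_flow_telescoping[OF decoupled_flow_out decoupled_flow_in] sum_distrib_left
      mult.left_commute)

lemma flow_exp_density:
  "flow z z' * exp (ln (density_fst (fst z) (fst z')) - log_tilt z z')
     = pis z * Q (snd z) (snd z') * flow_fst (fst z) (fst z') / marginal_fst (fst z)"
proof (cases "0 < P (fst z) (fst z')")
  case True
  then have "0 < density_fst (fst z) (fst z')"
    by (simp add: density_fst_def flow_fst_pos_iff marginal_fst_pos)
  then show ?thesis
    using True marginal_fst_pos[of "fst z"]
    by (simp add: flow_def R_eq density_fst_def exp_diff field_simps)
next
  case False
  then have "P (fst z) (fst z') = 0"
    using P_nonneg by (simp add: less_le)
  then show ?thesis
    by (simp add: flow_def R_eq flow_fst_eq_0)
qed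

lemma sum_flow_fst_ln_density_le:
  "(\<Sum>x\<in>UNIV. \<Sum>x'\<in>UNIV. flow_fst x x' * ln (density_fst x x')) \<le> \<theta> * (\<Sum>z\<in>UNIV. pis z * f z)"
proof -
  have "(\<Sum>z\<in>UNIV. \<Sum>z'\<in>UNIV. flow z z' * exp (ln (density_fst (fst z) (fst z')) - log_tilt z z'))
      = (\<Sum>z\<in>UNIV. \<Sum>z'\<in>UNIV. pis z * Q (snd z) (snd z') * flow_fst (fst z) (fst z') / marginal_fst (fst z))"
    by (simp add: flow_exp_density)
  also have "\<dots> = (\<Sum>x\<in>UNIV. \<Sum>x'\<in>UNIV.
      (\<Sum>y\<in>UNIV. \<Sum>y'\<in>UNIV. pis (x, y) * Q y y') * (flow_fst x x' / marginal_fst x))"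
    using sum_pairs_proj_fst[of "\<lambda>z z'. pis z * Q (snd z) (snd z')" "\<lambda>x x'. flow_fst x x' / marginal_fst x"]
    by simp
  also have "\<dots> = (\<Sum>x\<in>UNIV. \<Sum>x'\<in>UNIV. flow_fst x x')"
  proof -
    have "(\<Sum>y\<in>UNIV. \<Sum>y'\<in>UNIV. pis (x, y) * Q y y') = marginal_fst x" "marginal_fst x \<noteq> 0" for x
      using marginal_fst_pos[of x] by (simp_all add: marginal_fst_def Q_row_sum flip: sum_distrib_left)
    then show ?thesis
      by simp
  qed
  also have "\<dots> = (\<Sum>z\<in>UNIV. \<Sum>z'\<in>UNIV. flow z z')"
    by (simp add: flow_fst_out marginal_fst_sum flow_out pis_sum)
  finally have "(\<Sum>z\<in>UNIV. \<Sum>z'\<in>UNIV. flow z z' * (ln (density_fst (fst z) (fst z')) - log_tilt z z')) \<le> 0"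
    by (intro gibbs_inequality) (simp_all add: flow_nonneg)
  moreover have "(\<Sum>z\<in>UNIV. \<Sum>z'\<in>UNIV. flow z z' * ln (density_fst (fst z) (fst z')))
      = (\<Sum>x\<in>UNIV. \<Sum>x'\<in>UNIV. flow_fst x x' * ln (density_fst x x'))"
    unfolding flow_fst_def by (rule sum_pairs_proj_fst)
  ultimately show ?thesis
    by (simp add: right_diff_distrib sum_subtractf sum_flow_log_tilt)
qed

lemma decoupled_flow_exp_density:
  "decoupled_flow z z' * exp (log_tilt z z' - ln (density_fst (fst z) (fst z')))
     = marginal_fst (fst z) * piQ (snd z) * R z z'"
proof (cases "0 < P (fst z) (fst z')")
  case True
  then have "0 < flow_fst (fst z) (fst z')" "0 < density_fst (fst z) (fst z')"
    by (simp_all add: density_fst_def flow_fst_pos_iff marginal_fst_pos)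
  then show ?thesis
    using True marginal_fst_pos[of "fst z"]
    by (simp add: decoupled_flow_def R_eq density_fst_def exp_diff field_simps)
next
  case False
  then have "P (fst z) (fst z') = 0"
    using P_nonneg by (simp add: less_le)
  then show ?thesis
    by (simp add: decoupled_flow_def R_eq flow_fst_eq_0)
qed

lemma exists_log_tilt_neq_ln_density:
  "\<exists>x y x' y'. 0 < P x x' \<and> 0 < Q y y' \<and> log_tilt (x, y) (x', y') \<noteq> ln (density_fst x x')"
proof (rule ccontr)
  assume "\<not> ?thesis"
  then have tilt: "log_tilt (x, y) (x', y') = ln (density_fst x x')" if "0 < P x x'" "0 < Q y y'"
    for x y x' y'
    using that by blast
  have cycle_sum: "\<theta> * (\<Sum>k<n. real_of_int (f (xs k, ys k)))
      = (\<Sum>k<n. ln (density_fst (xs k) (xs ((k + 1) mod n))))"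
    if xs: "is_cycle P n xs" and ys: "is_cycle Q n ys" for n xs ys
  proof -
    define z where "z k = (xs k, ys k)" for k
    have "1 \<le> n"
      using xs by (simp add: is_cycle_def)
    have "(\<Sum>k<n. ln (density_fst (xs k) (xs ((k + 1) mod n))))
        = (\<Sum>k<n. log_tilt (z k) (z ((k + 1) mod n)))"
      using xs ys tilt by (simp add: is_cycle_def z_def)
    also have "\<dots> = \<theta> * (\<Sum>k<n. real_of_int (f (z ((k + 1) mod n))))
        + (\<Sum>k<n. ln (r (z ((k + 1) mod n)))) - (\<Sum>k<n. ln (r (z k)))"
      by (simp add: log_tilt_def sum.distrib sum_subtractf sum_distrib_left)
    also have "\<dots> = \<theta> * (\<Sum>k<n. real_of_int (f (z k)))"
      using sum_rotate[OF \<open>1 \<le> n\<close>, of "\<lambda>k. real_of_int (f (z k))"]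
        sum_rotate[OF \<open>1 \<le> n\<close>, of "\<lambda>k. ln (r (z k))"]
      by simp
    finally show ?thesis
      by (simp add: z_def)
  qed
  obtain n xs ys where cycles: "is_cycle P n xs" "is_cycle Q n ys"
    and shift: "(\<Sum>k<n. f (xs k, ys k)) \<noteq> (\<Sum>k<n. f (xs k, ys ((k + 1) mod n)))"
    using shift_sensitive_PQ unfolding shift_sensitive_def by blast
  have "\<theta> * (\<Sum>k<n. real_of_int (f (xs k, ys k)))
      = \<theta> * (\<Sum>k<n. real_of_int (f (xs k, ys ((k + 1) mod n))))"
    using cycle_sum[OF cycles] cycle_sum[OF cycles(1) is_cycle_shift[OF cycles(2)]] by simp
  then show False
    using shift \<theta>_pos by (simp flip: of_int_sum)
qed

lemma sum_decoupled_flow_log_tilt_less: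
  "(\<Sum>z\<in>UNIV. \<Sum>z'\<in>UNIV. decoupled_flow z z' * log_tilt z z')
     < (\<Sum>x\<in>UNIV. \<Sum>x'\<in>UNIV. flow_fst x x' * ln (density_fst x x'))"
proof -
  obtain x y x' y' where P: "0 < P x x'" and Q: "0 < Q y y'"
    and ne: "log_tilt (x, y) (x', y') \<noteq> ln (density_fst x x')"
    using exists_log_tilt_neq_ln_density by blast
  have "(\<Sum>z\<in>UNIV. \<Sum>z'\<in>UNIV. decoupled_flow z z' * exp (log_tilt z z' - ln (density_fst (fst z) (fst z'))))
      = (\<Sum>z\<in>UNIV. marginal_fst (fst z) * piQ (snd z) * (\<Sum>z'\<in>UNIV. R z z'))"
    by (simp add: decoupled_flow_exp_density sum_distrib_left)
  also have "\<dots> = (\<Sum>z\<in>UNIV. \<Sum>z'\<in>UNIV. decoupled_flow z z')"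
    by (simp add: R_row_sum decoupled_flow_out)
  moreover have "0 < decoupled_flow (x, y) (x', y')"
    using P Q piQ_pos[of y] by (simp add: decoupled_flow_def flow_fst_pos_iff)
  ultimately have "(\<Sum>z\<in>UNIV. \<Sum>z'\<in>UNIV. decoupled_flow z z' * (log_tilt z z' - ln (density_fst (fst z) (fst z')))) < 0"
    using ne by (intro gibbs_inequality_strict[where u = "(x, y)" and v = "(x', y')"])
      (simp_all add: decoupled_flow_nonneg)
  moreover have "(\<Sum>z\<in>UNIV. \<Sum>z'\<in>UNIV. decoupled_flow z z' * ln (density_fst (fst z) (fst z')))
      = (\<Sum>x\<in>UNIV. \<Sum>x'\<in>UNIV. (\<Sum>y\<in>UNIV. \<Sum>y'\<in>UNIV. decoupled_flow (x, y) (x', y')) * ln (density_fst x x'))"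
    by (rule sum_pairs_proj_fst)
  moreover have "(\<Sum>y\<in>UNIV. \<Sum>y'\<in>UNIV. decoupled_flow (x, y) (x', y')) = flow_fst x x'" for x x'
    by (simp add: decoupled_flow_def Q_row_sum piQ_sum flip: sum_distrib_left sum_distrib_right)
  ultimately show ?thesis
    by (simp add: right_diff_distrib sum_subtractf)
qed

theorem marginal_fst_product_less:
  "(\<Sum>z\<in>UNIV. marginal_fst (fst z) * piQ (snd z) * f z) < (\<Sum>z\<in>UNIV. pis z * f z)"
proof -
  have "\<theta> * (\<Sum>z\<in>UNIV. marginal_fst (fst z) * piQ (snd z) * f z) < \<theta> * (\<Sum>z\<in>UNIV. pis z * f z)"
    using sum_decoupled_flow_log_tilt sum_decoupled_flow_log_tilt_less sum_flow_fst_ln_density_le by linarith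
  then show ?thesis
    using \<theta>_pos by simp
qed

end

lemma tilted_product_chain_swap:
  assumes "tilted_product_chain P Q piQ f \<theta> r pis" "invariant_prob P piP"
  shows "tilted_product_chain Q P piP (f \<circ> prod.swap) \<theta> (r \<circ> prod.swap) (pis \<circ> prod.swap)"
proof -
  interpret tilted_product_chain P Q piQ f \<theta> r pis
    by (fact assms(1))
  have eigen: "(\<Sum>z'\<in>UNIV. Phi Q P (f \<circ> prod.swap) \<theta> z z' * r (prod.swap z')) = r (prod.swap z)" for z
    using eigenvector[of "prod.swap z"]
    by (simp add: Phi_swap sum_UNIV_swap[where g = "\<lambda>z'. Phi P Q f \<theta> (prod.swap z) z' * r z'"])
  have stationary: "(\<Sum>z\<in>UNIV. pis (prod.swap z) * (r (prod.swap z') / r (prod.swap z)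
      * Phi Q P (f \<circ> prod.swap) \<theta> z z')) = pis (prod.swap z')" for z'
  proof -
    have "(\<Sum>z\<in>UNIV. pis (prod.swap z) * (r (prod.swap z') / r (prod.swap z)
        * Phi Q P (f \<circ> prod.swap) \<theta> z z'))
        = (\<Sum>z\<in>UNIV. pis z * (r (prod.swap z') / r z * Phi P Q f \<theta> z (prod.swap z')))"
      unfolding Phi_swap by (rule sum_UNIV_swap)
    also have "\<dots> = pis (prod.swap z')"
      using invariant_pis unfolding invariant_prob_def by blast
    finally show ?thesis .
  qed
  show ?thesis
    by (intro tilted_product_chain.intro)
      (use assms(2) stochastic_P stochastic_Q irreducible_P irreducible_Q \<theta>_pos r_pos eigen
        stationary shift_sensitive_swap[OF shift_sensitive_PQ] pis_nonneg in \<open>auto simp: invariant_prob_def sum_UNIV_swap[of pis] pis_sum\<close>)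
qed

theorem lemma5p8:
  fixes P Q :: "'a::finite \<Rightarrow> 'a \<Rightarrow> real"
    and piP piQ :: "'a \<Rightarrow> real"
    and f :: "'a \<times> 'a \<Rightarrow> int"
    and \<theta>s :: real
    and rs :: "'a \<times> 'a \<Rightarrow> real"
    and pis :: "'a \<times> 'a \<Rightarrow> real"
  assumes "stochastic P" "irreducible_mat P" "aperiodic_mat P"
    and "stochastic Q" "irreducible_mat Q" "aperiodic_mat Q"
    and "invariant_prob P piP" "invariant_prob Q piQ"
    and "Gcd (range f) = 1"
    and mu_neg: "(\<Sum>z\<in>UNIV. piP (fst z) * piQ (snd z) * real_of_int (f z)) < 0"
    and "cond_C1 P Q f" "cond_C2 P Q f"
    and "\<theta>s > 0" "spectral_radius_mat (Phi P Q f \<theta>s) = 1"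
    and "\<forall>z. rs z > 0"
    and "\<forall>z. (\<Sum>z'\<in>UNIV. Phi P Q f \<theta>s z z' * rs z') = rs z"
    and "invariant_prob (\<lambda>z z'. rs z' / rs z * Phi P Q f \<theta>s z z') pis"
  shows "(\<Sum>z\<in>UNIV. (\<Sum>y\<in>UNIV. pis (fst z, y)) * piQ (snd z) * real_of_int (f z))
           < (\<Sum>z\<in>UNIV. pis z * real_of_int (f z))
         \<and> (\<Sum>z\<in>UNIV. piP (fst z) * (\<Sum>x\<in>UNIV. pis (x, snd z)) * real_of_int (f z))
           < (\<Sum>z\<in>UNIV. pis z * real_of_int (f z))"
proof -
  interpret tilted_product_chain P Q piQ f \<theta>s rs pis
    by (intro tilted_product_chain.intro) (use assms cond_C2_imp_shift_sensitive in auto)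
  interpret swapped: tilted_product_chain Q P piP "f \<circ> prod.swap" \<theta>s "rs \<circ> prod.swap" "pis \<circ> prod.swap"
    using tilted_product_chain_axioms assms(7) by (rule tilted_product_chain_swap)
  have "(\<Sum>z\<in>UNIV. piP (fst z) * (\<Sum>x\<in>UNIV. pis (x, snd z)) * real_of_int (f z))
      < (\<Sum>z\<in>UNIV. pis z * real_of_int (f z))"
    using swapped.marginal_fst_product_less sum_UNIV_swap[where g = "\<lambda>z. pis z * real_of_int (f z)"]
      sum_UNIV_swap[where g = "\<lambda>z. piP (fst z) * (\<Sum>x\<in>UNIV. pis (x, snd z)) * real_of_int (f z)"]
    by (simp add: swapped.marginal_fst_def mult_ac)
  then show ?thesis
    using marginal_fst_product_less by (simp add: marginal_fst_def)
qed

end
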